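(* Let $A\in\{0,1\}^{N\times n}$ be such that every row has exactly $k$ ones, and let $\mathcal{C}_A=\{\{i\in[n]:A_{ji}=1\}: j\in[N]\}$ be the family of row supports. Suppose $U_1,\dots,U_N,V_1,\dots,V_n\in\mathbb{R}^d$ form a margin-$m$, relative-bias-$0$ embedding of $A$ with $m>0$. Fix $\alpha\in(0,1/2]$ and set $s=\lfloor\alpha k\rfloor$, and assume $s\ge1$. Let $\mathcal{F}_s(A)$ be a family of $s$-element subsets of $[n]$ such that for all distinct $T,T'\in\mathcal{F}_s(A)$, $|T\cap T'|<\frac s2$ and $T\cup T'$ is shattered by $\mathcal{C}_A$. Then $$d\ \ge\ \frac{\log|\mathcal{F}_s(A)|}{\log\bigl(1+\frac{2}{m\sqrt{s}}\bigr)}.$$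
   Context: For $A\in\{0,1\}^{N\times n}$ and $m\ge0$, unit vectors $U_1,\dots,U_N,V_1,\dots,V_n\in\mathbb{R}^d$ form a margin-$m$, relative-bias-$0$ embedding of $A$ if $\langle U_j,V_i\rangle\ge m$ whenever $A_{ji}=1$ and $\langle U_j,V_i\rangle\le -m$ whenever $A_{ji}=0$. A set $B\subseteq[n]$ is shattered by a family $\mathcal{S}$ of subsets of $[n]$ if for every $C\subseteq B$ there is $S'\in\mathcal{S}$ with $S'\cap B=C$. *)

theory Defs
  imports "HOL-Analysis.Analysis"
begin

text \<open>A 0/1 matrix of size N x n is modelled as a predicate A j i (true iff the entry is 1),
  with rows j < N and columns i < n; [n] is rendered as {..<n}.\<close>

definition row_supports :: "nat \<Rightarrow> nat \<Rightarrow> (nat \<Rightarrow> nat \<Rightarrow> bool) \<Rightarrow> nat set set" where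
  "row_supports N n A = (\<lambda>j. {i \<in> {..<n}. A j i}) ` {..<N}"

definition shatters :: "'a set set \<Rightarrow> 'a set \<Rightarrow> bool" where
  "shatters S B \<longleftrightarrow> (\<forall>C \<subseteq> B. \<exists>S' \<in> S. S' \<inter> B = C)"

definition margin_embedding ::
  "nat \<Rightarrow> nat \<Rightarrow> (nat \<Rightarrow> nat \<Rightarrow> bool) \<Rightarrow> real \<Rightarrow> (nat \<Rightarrow> real ^ 'd) \<Rightarrow> (nat \<Rightarrow> real ^ 'd) \<Rightarrow> bool" where
  "margin_embedding N n A m U V \<longleftrightarrow>
     (\<forall>j<N. norm (U j) = 1) \<and> (\<forall>i<n. norm (V i) = 1) \<and>
     (\<forall>j<N. \<forall>i<n. (A j i \<longrightarrow> inner (U j) (V i) \<ge> m) \<and> (\<not> A j i \<longrightarrow> inner (U j) (V i) \<le> - m))"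

end

theory Submission
  imports Defs
begin

text \<open>Choose signs for the columns of each T in F so that the signed sum y_T of the column
  vectors has norm at most sqrt s (greedy balancing). For distinct T, T' the union is shattered,
  so some row vector U_j has the sign pattern of y_T - y_T'; the margin then gives
  |y_T - y_T'| \<ge> m |T \<triangle> T'| > m s. The points y_T thus form an (m s)-separated set in
  the ball of radius sqrt s in R^d, and comparing the volume of the disjoint balls of radius m s/2
  around them with that of the enclosing ball bounds their number by
  (1 + 2 sqrt s/(m s))^d = (1 + 2/(m sqrt s))^d.\<close>

lemma disjoint_family_on_balls_if_separated:
  fixes P :: "'a::metric_space set"
  assumes "\<forall>x\<in>P. \<forall>y\<in>P. x \<noteq> y \<longrightarrow> dist x y \<ge> \<delta>"
  shows "disjoint_family_on (\<lambda>x. ball x (\<delta>/2)) P"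
  unfolding disjoint_family_on_def
proof (intro ballI impI)
  fix x y assume xy: "x \<in> P" "y \<in> P" "x \<noteq> y"
  show "ball x (\<delta>/2) \<inter> ball y (\<delta>/2) = {}"
  proof (rule ccontr)
    assume "ball x (\<delta>/2) \<inter> ball y (\<delta>/2) \<noteq> {}"
    then obtain z where "dist x z < \<delta>/2" "dist y z < \<delta>/2" by auto
    then have "dist x y < \<delta>" using dist_triangle3[of x y z] by (simp add: dist_commute)
    with assms xy show False by force
  qed
qed

lemma card_le_if_separated_in_ball:
  fixes P :: "'a::euclidean_space set"
  assumes fin: "finite P" and in_ball: "\<forall>x\<in>P. norm x \<le> R" and R: "R \<ge> 0" and \<delta>_pos: "\<delta> > 0"
    and sep: "\<forall>x\<in>P. \<forall>y\<in>P. x \<noteq> y \<longrightarrow> dist x y \<ge> \<delta>"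
  shows "real (card P) \<le> (1 + 2 * R / \<delta>) ^ DIM('a)"
proof -
  define r where "r = \<delta>/2"
  have r_pos: "r > 0" using \<delta>_pos by (simp add: r_def)
  define c where "c = measure lborel (ball (0::'a) 1)"
  have c_pos: "c > 0" by (simp add: c_def)
  have ball_measure: "measure lborel (ball x \<rho>) = \<rho> ^ DIM('a) * c" if "\<rho> > 0" for x :: 'a and \<rho>
    unfolding c_def using that by (rule content_ball_conv_unit_ball[OF less_imp_le])
  have sub: "(\<Union>x\<in>P. ball x r) \<subseteq> ball 0 (R + r)"
  proof
    fix z assume "z \<in> (\<Union>x\<in>P. ball x r)"
    then obtain x where "x \<in> P" "dist x z < r" by auto
    moreover have "norm z \<le> norm x + dist x z"
      using norm_triangle_ineq4[of x "x - z"] by (simp add: dist_norm)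
    ultimately show "z \<in> ball 0 (R + r)" using in_ball by auto
  qed
  have "real (card P) * (r ^ DIM('a) * c) = (\<Sum>x\<in>P. measure lborel (ball x r))"
    using ball_measure[OF r_pos] by simp
  also have "\<dots> = measure lborel (\<Union>x\<in>P. ball x r)"
    using fin disjoint_family_on_balls_if_separated[OF sep]
      less_imp_neq[OF emeasure_lborel_ball_finite]
    by (intro measure_finite_Union[symmetric]) (auto simp: r_def)
  also have "\<dots> \<le> measure lborel (ball (0::'a) (R + r))"
    using emeasure_lborel_ball_finite[of "0::'a" "R + r"]
    by (intro measure_mono_fmeasurable[OF sub]) (auto simp: fmeasurable_def borel_open open_UN)
  also have "\<dots> = (R + r) ^ DIM('a) * c"
    using R r_pos by (intro ball_measure) simp
  finally have "real (card P) * r ^ DIM('a) \<le> (R + r) ^ DIM('a)" using c_pos by simp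
  then have "real (card P) \<le> ((R + r) / r) ^ DIM('a)"
    using r_pos by (simp add: power_divide field_simps)
  also have "(R + r) / r = 1 + 2 * R / \<delta>" using r_pos by (simp add: r_def field_simps)
  finally show ?thesis .
qed

lemma card_le_if_separated_family_in_ball:
  fixes p :: "'i \<Rightarrow> 'a::euclidean_space"
  assumes "finite I" and "\<forall>i\<in>I. norm (p i) \<le> R" and "R \<ge> 0" and "\<delta> > 0"
    and sep: "\<forall>i\<in>I. \<forall>j\<in>I. i \<noteq> j \<longrightarrow> dist (p i) (p j) \<ge> \<delta>"
  shows "real (card I) \<le> (1 + 2 * R / \<delta>) ^ DIM('a)"
proof -
  have "inj_on p I"
    using sep \<open>\<delta> > 0\<close> by (force intro: inj_onI)
  moreover have "real (card (p ` I)) \<le> (1 + 2 * R / \<delta>) ^ DIM('a)"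
    using assms by (intro card_le_if_separated_in_ball) auto
  ultimately show ?thesis by (simp add: card_image)
qed

lemma exists_signs_norm_sum_le:
  fixes V :: "'i \<Rightarrow> 'a::real_inner"
  assumes "finite T"
  shows "\<exists>e. (\<forall>i. e i = 1 \<or> e i = -1) \<and>
           (norm (\<Sum>i\<in>T. e i *\<^sub>R V i))\<^sup>2 \<le> (\<Sum>i\<in>T. (norm (V i))\<^sup>2)"
  using assms
proof (induction T rule: finite_induct)
  case empty
  show ?case by (rule exI[of _ "\<lambda>_. 1"]) simp
next
  case (insert a T)
  then obtain e where e: "\<forall>i. e i = 1 \<or> e i = -1"
    and IH: "(norm (\<Sum>i\<in>T. e i *\<^sub>R V i))\<^sup>2 \<le> (\<Sum>i\<in>T. (norm (V i))\<^sup>2)" by blast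
  define w where "w = (\<Sum>i\<in>T. e i *\<^sub>R V i)"
  \<comment> \<open>The new sign makes the cross term non-positive.\<close>
  define t where "t = (if inner w (V a) \<le> 0 then (1::real) else -1)"
  have "(\<Sum>i\<in>insert a T. (e(a := t)) i *\<^sub>R V i) = t *\<^sub>R V a + w"
    using insert unfolding w_def by (auto intro: sum.cong)
  moreover have "(norm (t *\<^sub>R V a + w))\<^sup>2 = t\<^sup>2 * (norm (V a))\<^sup>2 + 2 * (t * inner (V a) w) + (norm w)\<^sup>2"
    unfolding power2_norm_eq_inner
    by (simp add: inner_add_left inner_add_right inner_commute algebra_simps power2_eq_square)
  moreover have "t\<^sup>2 = 1" "t * inner (V a) w \<le> 0" by (auto simp: t_def inner_commute)
  ultimately have "(norm (\<Sum>i\<in>insert a T. (e(a := t)) i *\<^sub>R V i))\<^sup>2 \<le> (\<Sum>i\<in>insert a T. (norm (V i))\<^sup>2)"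
    using insert IH unfolding w_def by simp
  moreover have "\<forall>i. (e(a := t)) i = 1 \<or> (e(a := t)) i = -1" using e by (simp add: t_def)
  ultimately show ?case by blast
qed

lemma exists_signs_norm_sum_le_sqrt_card:
  fixes V :: "'i \<Rightarrow> 'a::real_inner"
  assumes "finite T" and "\<forall>i\<in>T. norm (V i) = 1"
  shows "\<exists>e. (\<forall>i. e i = 1 \<or> e i = -1) \<and> norm (\<Sum>i\<in>T. e i *\<^sub>R V i) \<le> sqrt (real (card T))"
proof -
  obtain e where "\<forall>i. e i = 1 \<or> e i = -1"
    and "(norm (\<Sum>i\<in>T. e i *\<^sub>R V i))\<^sup>2 \<le> (\<Sum>i\<in>T. (norm (V i))\<^sup>2)"
    using exists_signs_norm_sum_le[OF assms(1)] by blast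
  moreover have "(\<Sum>i\<in>T. (norm (V i))\<^sup>2) = real (card T)"
    using assms(2) by simp
  ultimately show ?thesis
    by (intro exI[of _ e]) (simp add: real_le_rsqrt)
qed

lemma margin_embedding_norm_sum_ge:
  assumes emb: "margin_embedding N n A m U V"
    and B: "B \<subseteq> {..<n}" and shat: "shatters (row_supports N n A) B"
  shows "m * (\<Sum>i\<in>B. \<bar>c i\<bar>) \<le> norm (\<Sum>i\<in>B. c i *\<^sub>R V i)"
proof -
  have "{i \<in> B. c i > 0} \<subseteq> B" by auto
  then obtain S where "S \<in> row_supports N n A" "S \<inter> B = {i \<in> B. c i > 0}"
    using shat unfolding shatters_def by blast
  then obtain j where j: "j < N" and row_sign: "\<And>i. i \<in> B \<Longrightarrow> A j i \<longleftrightarrow> c i > 0"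
    using B unfolding row_supports_def by blast
  have term_ge: "m * \<bar>c i\<bar> \<le> c i * inner (U j) (V i)" if "i \<in> B" for i
  proof (cases "c i > 0")
    case True
    then have "m \<le> inner (U j) (V i)" using emb j that B row_sign
      unfolding margin_embedding_def by auto
    then show ?thesis using True by (simp add: mult.commute mult_left_mono)
  next
    case False
    then have "inner (U j) (V i) \<le> - m" using emb j that B row_sign
      unfolding margin_embedding_def by auto
    then have "(- c i) * m \<le> (- c i) * (- inner (U j) (V i))"
      using False by (intro mult_left_mono) auto
    then show ?thesis using False by (simp add: abs_if mult.commute)
  qed
  have "m * (\<Sum>i\<in>B. \<bar>c i\<bar>) \<le> (\<Sum>i\<in>B. c i * inner (U j) (V i))"
    unfolding sum_distrib_left by (rule sum_mono) (rule term_ge)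
  also have "\<dots> = inner (U j) (\<Sum>i\<in>B. c i *\<^sub>R V i)"
    by (simp add: inner_sum_right)
  also have "\<dots> \<le> norm (\<Sum>i\<in>B. c i *\<^sub>R V i)"
    using norm_cauchy_schwarz[of "U j"] emb j unfolding margin_embedding_def by simp
  finally show ?thesis .
qed

lemma card_sym_diff:
  assumes "finite T" "finite T'"
  shows "card (sym_diff T T') = card T + card T' - 2 * card (T \<inter> T')"
proof -
  have "card (sym_diff T T') = card (T - T') + card (T' - T)"
    using assms by (intro card_Un_disjoint) auto
  then show ?thesis
    using card_Int_Diff[OF assms(1), of T'] card_Int_Diff[OF assms(2), of T]
    by (simp add: Int_commute)
qed

lemma margin_embedding_dist_signed_sums:
  assumes emb: "margin_embedding N n A m U V"
    and TT': "T \<union> T' \<subseteq> {..<n}" and shat: "shatters (row_supports N n A) (T \<union> T')"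
    and e: "\<forall>i. e i = 1 \<or> e i = -1" and e': "\<forall>i. e' i = 1 \<or> e' i = -1"
    and m_nonneg: "m \<ge> 0"
  shows "m * real (card (sym_diff T T')) \<le> dist (\<Sum>i\<in>T. e i *\<^sub>R V i) (\<Sum>i\<in>T'. e' i *\<^sub>R V i)"
proof -
  have fin: "finite (T \<union> T')" using TT' finite_subset by blast
  define c where "c i = (if i \<in> T then e i else 0) - (if i \<in> T' then e' i else 0)" for i
  have extend: "(\<Sum>i\<in>X. f i *\<^sub>R V i) = (\<Sum>i\<in>T \<union> T'. (if i \<in> X then f i else 0) *\<^sub>R V i)"
    if "X \<subseteq> T \<union> T'" for X and f :: "nat \<Rightarrow> real"
    using that fin by (intro sum.mono_neutral_cong_left) auto
  have diff: "(\<Sum>i\<in>T. e i *\<^sub>R V i) - (\<Sum>i\<in>T'. e' i *\<^sub>R V i) = (\<Sum>i\<in>T \<union> T'. c i *\<^sub>R V i)"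
    unfolding extend[OF Un_upper1] extend[OF Un_upper2] c_def
    by (simp add: sum_subtractf[symmetric] scaleR_diff_left)
  have "\<bar>c i\<bar> = 1" if "i \<in> sym_diff T T'" for i
  proof -
    have "c i = e i \<or> c i = - e' i" using that unfolding c_def by auto
    then show ?thesis using e e' by (metis abs_minus_cancel abs_one)
  qed
  then have "real (card (sym_diff T T')) = (\<Sum>i\<in>sym_diff T T'. \<bar>c i\<bar>)"
    by simp
  also have "\<dots> \<le> (\<Sum>i\<in>T \<union> T'. \<bar>c i\<bar>)"
    using fin by (intro sum_mono2) auto
  finally have "m * real (card (sym_diff T T')) \<le> m * (\<Sum>i\<in>T \<union> T'. \<bar>c i\<bar>)"
    using m_nonneg by (rule mult_left_mono)
  also have "\<dots> \<le> norm (\<Sum>i\<in>T \<union> T'. c i *\<^sub>R V i)"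
    by (rule margin_embedding_norm_sum_ge[OF emb TT' shat])
  finally show ?thesis unfolding dist_norm diff .
qed

lemma ln_div_ln_le_if_le_power:
  fixes x b :: real
  assumes "0 \<le> x" "x \<le> b ^ d" "1 < b"
  shows "ln x / ln b \<le> real d"
proof -
  have "ln x \<le> ln (b ^ d)"
    using assms by (cases "x = 0") auto
  then show ?thesis
    using assms by (simp add: ln_realpow divide_le_eq)
qed

theorem theoremF1:
  fixes N n k :: nat and A :: "nat \<Rightarrow> nat \<Rightarrow> bool"
    and U V :: "nat \<Rightarrow> real ^ 'd" and m \<alpha> :: real and s :: nat
    and F :: "nat set set"
  assumes rows: "\<forall>j<N. card {i \<in> {..<n}. A j i} = k"
    and emb: "margin_embedding N n A m U V"
    and m_pos: "m > 0"
    and alpha: "0 < \<alpha>" "\<alpha> \<le> 1/2"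
    and s_def: "s = nat \<lfloor>\<alpha> * real k\<rfloor>"
    and s_pos: "s \<ge> 1"
    and F_sub: "\<forall>T \<in> F. T \<subseteq> {..<n} \<and> card T = s"
    and F_pair: "\<forall>T \<in> F. \<forall>T' \<in> F. T \<noteq> T' \<longrightarrow>
                   real (card (T \<inter> T')) < real s / 2 \<and> shatters (row_supports N n A) (T \<union> T')"
  shows "real CARD('d) \<ge> ln (real (card F)) / ln (1 + 2 / (m * sqrt (real s)))"
proof -
  have "finite F" using F_sub by (intro finite_subset[of F "Pow {..<n}"]) auto
  have fin: "finite T" if "T \<in> F" for T
    using F_sub that by (meson finite_lessThan finite_subset)
  have "\<forall>T\<in>F. \<exists>e. (\<forall>i. e i = 1 \<or> e i = -1) \<and> norm (\<Sum>i\<in>T. e i *\<^sub>R V i) \<le> sqrt (real s)"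
  proof
    fix T assume T: "T \<in> F"
    have "\<forall>i\<in>T. norm (V i) = 1"
      using emb F_sub T unfolding margin_embedding_def by blast
    then show "\<exists>e. (\<forall>i. e i = 1 \<or> e i = -1) \<and> norm (\<Sum>i\<in>T. e i *\<^sub>R V i) \<le> sqrt (real s)"
      using exists_signs_norm_sum_le_sqrt_card[OF fin[OF T]] F_sub T by simp
  qed
  then obtain e where e: "\<forall>T\<in>F. (\<forall>i. e T i = 1 \<or> e T i = -1) \<and>
      norm (\<Sum>i\<in>T. e T i *\<^sub>R V i) \<le> sqrt (real s)"
    by (rule bchoice[THEN exE]) blast
  define y where "y T = (\<Sum>i\<in>T. e T i *\<^sub>R V i)" for T
  have "m * real s \<le> dist (y T) (y T')" if T: "T \<in> F" "T' \<in> F" "T \<noteq> T'" for T T'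
  proof -
    have "real (card (T \<inter> T')) < real s / 2"
      using F_pair T by blast
    then have "s \<le> card (sym_diff T T')"
      using card_sym_diff[OF fin fin, OF T(1,2)] F_sub T by simp
    then have "m * real s \<le> m * real (card (sym_diff T T'))"
      using m_pos by simp
    also have "\<dots> \<le> dist (y T) (y T')"
      unfolding y_def using F_sub F_pair T e m_pos
      by (intro margin_embedding_dist_signed_sums[OF emb]) auto
    finally show ?thesis .
  qed
  moreover have "norm (y T) \<le> sqrt (real s)" if "T \<in> F" for T
    using e that by (simp add: y_def)
  ultimately have "real (card F) \<le> (1 + 2 * sqrt (real s) / (m * real s)) ^ DIM(real ^ 'd)"
    using \<open>finite F\<close> m_pos s_pos by (intro card_le_if_separated_family_in_ball) auto
  also have "2 * sqrt (real s) / (m * real s) = 2 / (m * sqrt (real s))"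
    using m_pos s_pos real_div_sqrt[of "real s"] by (simp add: field_simps)
  finally show ?thesis
    using m_pos s_pos by (intro ln_div_ln_le_if_le_power) auto
qed

end
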